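(* For integers $M\ge L>N\ge1$, every configuration of the four-vertex model on the $L\times M$ grid with scalar-product boundary conditions has exactly $(L-N)(M-N)$ vertices of type $a$, $N(M-L+N)$ vertices of type $b$ and $2N(L-N)$ vertices of type $c$. Consequently the weighted partition function $\sum_{\text{conf}}a^{\#a}b^{\#b}c^{\#c}$ equals $a^{(L-N)(M-N)}b^{N(M-L+N)}c^{2N(L-N)}Z_{L,M,N}$, with $Z_{L,M,N}$ the number of configurations.
   Context: Four-vertex model: on the grid of vertices $(n,m)$, $1\le n\le L$, $1\le m\le M$, every edge (including boundary edges sticking out of the rectangle) is thick or thin, such that at every vertex the four incident edges form one of four allowed local configurations: type $a$: all thin; type $b$: both vertical edges thick, both horizontal thin; type $c$ (two kinds): south and east thick, west and north thin; or west and north thick, south and east thin. Scalar-product boundary conditions: the south boundary vertical edges in columns $1,\dots,N$ and the north boundary vertical edges in columns $L-N+1,\dots,L$ are thick; all other boundary edges are thin. $\#a,\#b,\#c$ denote the numbers of vertices of each type in a configuration. *)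

theory Defs
  imports Main
begin

text \<open>Vertices (n,m), 1 \<le> n \<le> L (column), 1 \<le> m \<le> M (row).
  A configuration is a pair (V, H) of edge-states (True = thick):
  V n m : vertical edge in column n between rows m and m+1 (0 \<le> m \<le> M;
          m = 0 south boundary, m = M north boundary);
  H n m : horizontal edge in row m between columns n and n+1 (0 \<le> n \<le> L;
          n = 0 west boundary, n = L east boundary).
  Outside these index ranges the functions are required to be False, so that
  configurations are in bijection with edge colourings of the grid.\<close>

type_synonym config = "(nat \<Rightarrow> nat \<Rightarrow> bool) \<times> (nat \<Rightarrow> nat \<Rightarrow> bool)"

definition south :: "config \<Rightarrow> nat \<Rightarrow> nat \<Rightarrow> bool" where
  "south C n m = fst C n (m - 1)"
definition north :: "config \<Rightarrow> nat \<Rightarrow> nat \<Rightarrow> bool" where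
  "north C n m = fst C n m"
definition west :: "config \<Rightarrow> nat \<Rightarrow> nat \<Rightarrow> bool" where
  "west C n m = snd C (n - 1) m"
definition east :: "config \<Rightarrow> nat \<Rightarrow> nat \<Rightarrow> bool" where
  "east C n m = snd C n m"

definition type_a :: "config \<Rightarrow> nat \<Rightarrow> nat \<Rightarrow> bool" where
  "type_a C n m \<longleftrightarrow> \<not> south C n m \<and> \<not> north C n m \<and> \<not> west C n m \<and> \<not> east C n m"
definition type_b :: "config \<Rightarrow> nat \<Rightarrow> nat \<Rightarrow> bool" where
  "type_b C n m \<longleftrightarrow> south C n m \<and> north C n m \<and> \<not> west C n m \<and> \<not> east C n m"
definition type_c :: "config \<Rightarrow> nat \<Rightarrow> nat \<Rightarrow> bool" where
  "type_c C n m \<longleftrightarrow>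
     (south C n m \<and> east C n m \<and> \<not> west C n m \<and> \<not> north C n m) \<or>
     (west C n m \<and> north C n m \<and> \<not> south C n m \<and> \<not> east C n m)"

definition grid :: "nat \<Rightarrow> nat \<Rightarrow> (nat \<times> nat) set" where
  "grid L M = {1..L} \<times> {1..M}"

definition configs :: "nat \<Rightarrow> nat \<Rightarrow> nat \<Rightarrow> config set" where
  "configs L M N = {C.
     (\<forall>n m. fst C n m \<longrightarrow> 1 \<le> n \<and> n \<le> L \<and> m \<le> M) \<and>
     (\<forall>n m. snd C n m \<longrightarrow> n \<le> L \<and> 1 \<le> m \<and> m \<le> M) \<and>
     (\<forall>(n, m) \<in> grid L M. type_a C n m \<or> type_b C n m \<or> type_c C n m) \<and>
     (\<forall>n \<in> {1..L}. fst C n 0 \<longleftrightarrow> n \<le> N) \<and>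
     (\<forall>n \<in> {1..L}. fst C n M \<longleftrightarrow> L - N + 1 \<le> n) \<and>
     (\<forall>m \<in> {1..M}. \<not> snd C 0 m \<and> \<not> snd C L m)}"

definition num_a :: "nat \<Rightarrow> nat \<Rightarrow> config \<Rightarrow> nat" where
  "num_a L M C = card {(n, m) \<in> grid L M. type_a C n m}"
definition num_b :: "nat \<Rightarrow> nat \<Rightarrow> config \<Rightarrow> nat" where
  "num_b L M C = card {(n, m) \<in> grid L M. type_b C n m}"
definition num_c :: "nat \<Rightarrow> nat \<Rightarrow> config \<Rightarrow> nat" where
  "num_c L M C = card {(n, m) \<in> grid L M. type_c C n m}"

definition partition_fn :: "nat \<Rightarrow> nat \<Rightarrow> nat \<Rightarrow> 'a::comm_semiring_1 \<Rightarrow> 'a \<Rightarrow> 'a \<Rightarrow> 'a" where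
  "partition_fn L M N a b c =
     (\<Sum>C \<in> configs L M N. a ^ num_a L M C * b ^ num_b L M C * c ^ num_c L M C)"

end

theory Submission
  imports Defs
begin

text \<open>Every allowed vertex conserves thick lines: south + west = north + east.
  Summing this over a row with column weights w shows that the weighted count of thick
  vertical edges changes across row m by the sum of w(k+1) - w(k) over the thick
  horizontal edges (k, m). For w = 1 every level carries exactly N thick vertical edges;
  for w(n) = n the total number of thick horizontal edges is the difference of the
  column-index sums of the thick vertical edges on the north and south boundary, namely
  N(L - N). A row with h thick horizontal edges has L - N - h vertices of type a, N - h
  of type b and 2h of type c; summing over the rows gives the counts, so every
  configuration has the same weight.\<close>

lemma sum_atLeast1_atMost_eq_atLeast0:
  fixes g :: "nat \<Rightarrow> 'a::comm_monoid_add"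
  assumes "g 0 = 0"
  shows "(\<Sum>n=1..L. g n) = (\<Sum>n=0..L. g n)"
  using assms by (simp add: sum.atLeast_Suc_atMost)

lemma sum_atLeast1_atMost_pred:
  fixes g :: "nat \<Rightarrow> 'a::comm_monoid_add"
  assumes "g L = 0"
  shows "(\<Sum>n=1..L. g (n - 1)) = (\<Sum>n=0..L. g n)"
proof (cases L)
  case 0
  then show ?thesis using assms by simp
next
  case (Suc K)
  have "(\<Sum>n=Suc 0..Suc K. g (n - 1)) = (\<Sum>n=0..K. g n)"
    by (simp only: sum.shift_bounds_cl_Suc_ivl) simp
  then show ?thesis
    using assms Suc by (simp add: sum.atLeast0_atMost_Suc)
qed

lemma sum_upper_block_int:
  assumes "N \<le> L"
  shows "(\<Sum>n=L-N+1..L. int n) = (\<Sum>n=1..N. int n) + int N * (int L - int N)"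
proof -
  obtain d where L: "L = N + d"
    using assms le_Suc_ex by blast
  have "(\<Sum>n=1+d..N+d. int n) = (\<Sum>n=1..N. int n + int d)"
    by (simp only: sum.shift_bounds_cl_nat_ivl) simp
  then show ?thesis
    by (simp add: L sum.distrib add.commute)
qed

lemma card_grid_filter:
  "int (card {(n, m) \<in> grid L M. P n m}) = (\<Sum>m=1..M. \<Sum>n=1..L. of_bool (P n m))"
proof -
  have "{(n, m) \<in> grid L M. P n m} = grid L M \<inter> {x. case x of (n, m) \<Rightarrow> P n m}"
    by auto
  then have "int (card {(n, m) \<in> grid L M. P n m})
      = (\<Sum>x\<in>grid L M. of_bool (case x of (n, m) \<Rightarrow> P n m))"
    by (simp add: grid_def)
  also have "\<dots> = (\<Sum>(n, m)\<in>{1..L} \<times> {1..M}. of_bool (P n m))"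
    unfolding grid_def by (intro sum.cong) auto
  also have "\<dots> = (\<Sum>n=1..L. \<Sum>m=1..M. of_bool (P n m))"
    by (rule sum.cartesian_product[symmetric])
  finally show ?thesis
    by (simp only: sum.swap[of _ "{1..L}"])
qed

lemma allowed_vertex_indicators:
  assumes "type_a C n m \<or> type_b C n m \<or> type_c C n m"
  shows "of_bool (type_a C n m) = (1::int) - of_bool (south C n m) - of_bool (west C n m)"
    and "of_bool (type_b C n m) = (of_bool (south C n m) - of_bool (east C n m) :: int)"
    and "of_bool (type_c C n m) = (of_bool (west C n m) + of_bool (east C n m) :: int)"
  using assms unfolding type_a_def type_b_def type_c_def by auto

lemma allowed_vertex_conservation:
  assumes "type_a C n m \<or> type_b C n m \<or> type_c C n m"
  shows "of_bool (south C n m) + of_bool (west C n m)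
    = (of_bool (north C n m) + of_bool (east C n m) :: int)"
  using assms unfolding type_a_def type_b_def type_c_def by auto

lemma config_vertex_allowed:
  assumes "C \<in> configs L M N" "n \<in> {1..L}" "m \<in> {1..M}"
  shows "type_a C n m \<or> type_b C n m \<or> type_c C n m"
  using assms unfolding configs_def grid_def by auto

lemma config_horizontal_boundary:
  assumes "C \<in> configs L M N" "m \<in> {1..M}"
  shows "\<not> snd C 0 m" "\<not> snd C L m"
  using assms unfolding configs_def by auto

definition vertical_moment :: "config \<Rightarrow> nat \<Rightarrow> (nat \<Rightarrow> int) \<Rightarrow> nat \<Rightarrow> int" where
  "vertical_moment C L w m = (\<Sum>n=1..L. w n * of_bool (fst C n m))"

definition horizontal_thick :: "config \<Rightarrow> nat \<Rightarrow> nat \<Rightarrow> int" where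
  "horizontal_thick C L m = (\<Sum>k=0..L. of_bool (snd C k m))"

lemma config_row_sum_west:
  fixes w :: "nat \<Rightarrow> 'a::semiring_1"
  assumes "C \<in> configs L M N" "m \<in> {1..M}"
  shows "(\<Sum>n=1..L. w n * of_bool (west C n m)) = (\<Sum>k=0..L. w (Suc k) * of_bool (snd C k m))"
proof -
  have "(\<Sum>n=1..L. w n * of_bool (west C n m))
      = (\<Sum>n=1..L. w (Suc (n - 1)) * of_bool (snd C (n - 1) m))"
    unfolding west_def by (intro sum.cong) auto
  also have "\<dots> = (\<Sum>k=0..L. w (Suc k) * of_bool (snd C k m))"
    by (rule sum_atLeast1_atMost_pred) (simp add: config_horizontal_boundary[OF assms])
  finally show ?thesis .
qed

lemma config_row_sum_east:
  fixes w :: "nat \<Rightarrow> 'a::semiring_1"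
  assumes "C \<in> configs L M N" "m \<in> {1..M}"
  shows "(\<Sum>n=1..L. w n * of_bool (east C n m)) = (\<Sum>k=0..L. w k * of_bool (snd C k m))"
  unfolding east_def
  by (rule sum_atLeast1_atMost_eq_atLeast0) (simp add: config_horizontal_boundary[OF assms])

lemma vertical_moment_step:
  assumes C: "C \<in> configs L M N" and m: "m \<in> {1..M}"
  shows "vertical_moment C L w m
    = vertical_moment C L w (m - 1) + (\<Sum>k=0..L. (w (Suc k) - w k) * of_bool (snd C k m))"
proof -
  have "(\<Sum>n=1..L. w n * (of_bool (south C n m) + of_bool (west C n m)))
      = (\<Sum>n=1..L. w n * (of_bool (north C n m) + of_bool (east C n m)))"
    using allowed_vertex_conservation[OF config_vertex_allowed[OF C _ m]] by (intro sum.cong) auto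
  then show ?thesis
    using config_row_sum_west[OF C m, of w] config_row_sum_east[OF C m, of w]
    unfolding vertical_moment_def
    by (simp add: south_def north_def distrib_left sum.distrib left_diff_distrib sum_subtractf)
qed

lemma config_vertical_moment_bottom:
  assumes "C \<in> configs L M N" "N \<le> L"
  shows "vertical_moment C L w 0 = (\<Sum>n=1..N. w n)"
proof -
  have "vertical_moment C L w 0 = (\<Sum>n=1..L. w n * of_bool (n \<le> N))"
    using assms(1) unfolding vertical_moment_def configs_def by (intro sum.cong) auto
  also have "\<dots> = sum w ({1..L} \<inter> {n. n \<le> N})"
    by simp
  also have "{1..L} \<inter> {n. n \<le> N} = {1..N}"
    using assms(2) by auto
  finally show ?thesis .
qed

lemma config_vertical_moment_top:
  assumes "C \<in> configs L M N"
  shows "vertical_moment C L w M = (\<Sum>n=L-N+1..L. w n)"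
proof -
  have "vertical_moment C L w M = (\<Sum>n=1..L. w n * of_bool (L - N + 1 \<le> n))"
    using assms unfolding vertical_moment_def configs_def by (intro sum.cong) auto
  also have "\<dots> = sum w ({1..L} \<inter> {n. L - N + 1 \<le> n})"
    by simp
  also have "{1..L} \<inter> {n. L - N + 1 \<le> n} = {L-N+1..L}"
    by auto
  finally show ?thesis .
qed

lemma config_vertical_count:
  assumes C: "C \<in> configs L M N" and "N \<le> L" and "j \<le> M"
  shows "vertical_moment C L (\<lambda>_. 1) j = int N"
  using \<open>j \<le> M\<close>
proof (induction j)
  case 0
  then show ?case using config_vertical_moment_bottom[OF C \<open>N \<le> L\<close>] by simp
next
  case (Suc j)
  then show ?case using vertical_moment_step[OF C, of "Suc j" "\<lambda>_. 1"] by simp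
qed

lemma config_horizontal_total:
  assumes C: "C \<in> configs L M N" and "N \<le> L"
  shows "(\<Sum>m=1..M. horizontal_thick C L m) = int N * (int L - int N)"
proof -
  let ?P = "vertical_moment C L int"
  have "(\<Sum>m=1..M. horizontal_thick C L m) = (\<Sum>m=Suc 0..M. ?P m - ?P (m - 1))"
    using vertical_moment_step[OF C] by (intro sum.cong) (simp_all add: horizontal_thick_def)
  also have "\<dots> = ?P M - ?P 0"
    by (rule sum_telescope'') simp
  also have "\<dots> = int N * (int L - int N)"
    using config_vertical_moment_bottom[OF C \<open>N \<le> L\<close>] config_vertical_moment_top[OF C]
      sum_upper_block_int[OF \<open>N \<le> L\<close>] by simp
  finally show ?thesis .
qed

lemma config_row_counts:
  assumes C: "C \<in> configs L M N" and "N \<le> L" and m: "m \<in> {1..M}"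
  shows "(\<Sum>n=1..L. of_bool (type_a C n m)) = int L - int N - horizontal_thick C L m"
    and "(\<Sum>n=1..L. of_bool (type_b C n m)) = int N - horizontal_thick C L m"
    and "(\<Sum>n=1..L. of_bool (type_c C n m)) = 2 * horizontal_thick C L m"
proof -
  note indicators = allowed_vertex_indicators[OF config_vertex_allowed[OF C _ m]]
  have "m - 1 \<le> M"
    using m by auto
  from config_vertical_count[OF C \<open>N \<le> L\<close> this]
  have south: "(\<Sum>n=1..L. of_bool (south C n m)) = int N"
    unfolding vertical_moment_def south_def by simp
  have west: "(\<Sum>n=1..L. of_bool (west C n m)) = horizontal_thick C L m"
    using config_row_sum_west[OF C m, of "\<lambda>_. 1::int"] unfolding horizontal_thick_def by simp
  have east: "(\<Sum>n=1..L. of_bool (east C n m)) = horizontal_thick C L m"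
    using config_row_sum_east[OF C m, of "\<lambda>_. 1::int"] unfolding horizontal_thick_def by simp
  have "(\<Sum>n=1..L. of_bool (type_a C n m))
      = (\<Sum>n=1..L. 1 - of_bool (south C n m) - of_bool (west C n m) :: int)"
    using indicators(1) by (intro sum.cong) auto
  then show "(\<Sum>n=1..L. of_bool (type_a C n m)) = int L - int N - horizontal_thick C L m"
    using south west by (simp add: sum_subtractf)
  have "(\<Sum>n=1..L. of_bool (type_b C n m))
      = (\<Sum>n=1..L. of_bool (south C n m) - of_bool (east C n m) :: int)"
    using indicators(2) by (intro sum.cong) auto
  then show "(\<Sum>n=1..L. of_bool (type_b C n m)) = int N - horizontal_thick C L m"
    using south east by (simp add: sum_subtractf)
  have "(\<Sum>n=1..L. of_bool (type_c C n m))
      = (\<Sum>n=1..L. of_bool (west C n m) + of_bool (east C n m) :: int)"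
    using indicators(3) by (intro sum.cong) auto
  then show "(\<Sum>n=1..L. of_bool (type_c C n m)) = 2 * horizontal_thick C L m"
    using west east by (simp add: sum.distrib)
qed

lemma config_vertex_type_counts:
  assumes C: "C \<in> configs L M N" and "N \<le> L"
  shows "int (num_a L M C) = (int L - int N) * (int M - int N)"
    and "int (num_b L M C) = int N * (int M - int L + int N)"
    and "int (num_c L M C) = 2 * int N * (int L - int N)"
proof -
  note rows = config_row_counts[OF C \<open>N \<le> L\<close>]
  note total = config_horizontal_total[OF C \<open>N \<le> L\<close>]
  have "int (num_a L M C) = (\<Sum>m=1..M. int L - int N - horizontal_thick C L m)"
    unfolding num_a_def card_grid_filter using rows(1) by (intro sum.cong) auto
  also have "\<dots> = int M * (int L - int N) - int N * (int L - int N)"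
    using total by (simp add: sum_subtractf)
  finally show "int (num_a L M C) = (int L - int N) * (int M - int N)"
    by (simp add: algebra_simps)
  have "int (num_b L M C) = (\<Sum>m=1..M. int N - horizontal_thick C L m)"
    unfolding num_b_def card_grid_filter using rows(2) by (intro sum.cong) auto
  also have "\<dots> = int M * int N - int N * (int L - int N)"
    using total by (simp add: sum_subtractf)
  finally show "int (num_b L M C) = int N * (int M - int L + int N)"
    by (simp add: algebra_simps)
  have "int (num_c L M C) = (\<Sum>m=1..M. 2 * horizontal_thick C L m)"
    unfolding num_c_def card_grid_filter using rows(3) by (intro sum.cong) auto
  then show "int (num_c L M C) = 2 * int N * (int L - int N)"
    using total by (simp add: sum_distrib_left[symmetric])
qed

lemma partition_fn_constant_counts:
  assumes "\<And>C. C \<in> configs L M N \<Longrightarrow> num_a L M C = i \<and> num_b L M C = j \<and> num_c L M C = k"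
  shows "partition_fn L M N a b c = a ^ i * b ^ j * c ^ k * of_nat (card (configs L M N))"
proof -
  have "partition_fn L M N a b c = (\<Sum>C\<in>configs L M N. a ^ i * b ^ j * c ^ k)"
    unfolding partition_fn_def using assms by (intro sum.cong) auto
  then show ?thesis
    by (simp add: mult.commute)
qed

theorem mainTheorem4:
  fixes L M N :: nat and a b c :: "'a::comm_semiring_1"
  assumes "1 \<le> N" and "N < L" and "L \<le> M"
  shows "(\<forall>C \<in> configs L M N.
            num_a L M C = (L - N) * (M - N) \<and>
            num_b L M C = N * (M - L + N) \<and>
            num_c L M C = 2 * N * (L - N)) \<and>
         partition_fn L M N a b c =
           a ^ ((L - N) * (M - N)) * b ^ (N * (M - L + N)) * c ^ (2 * N * (L - N))
             * of_nat (card (configs L M N))"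
proof -
  have counts: "num_a L M C = (L - N) * (M - N) \<and> num_b L M C = N * (M - L + N)
      \<and> num_c L M C = 2 * N * (L - N)" if C: "C \<in> configs L M N" for C
  proof -
    have "int (num_a L M C) = int ((L - N) * (M - N))"
      and "int (num_b L M C) = int (N * (M - L + N))"
      and "int (num_c L M C) = int (2 * N * (L - N))"
      using config_vertex_type_counts[OF C] assms by simp_all
    then show ?thesis
      by (simp only: of_nat_eq_iff)
  qed
  then show ?thesis
    using partition_fn_constant_counts[OF counts] by blast
qed

end
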